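(* Let $G$ be a finite group with conjugacy classes $\mathcal{C}_1,\dots,\mathcal{C}_s$, let $r\geq 2$ be a prime, and let $g\in G\wr S_n$ have type $T(g)=(T(g)_{ij})_{s\times n}$. Then for $1\le i\le s$, $1\le j\le n$, $$T(g^r)_{i,j}=\begin{cases}\sum_{z=1}^{m}T(g)_{y_z,j}+rT(g)_{i,rj} & \text{if } r\nmid j,\\ rT(g)_{i,rj} & \text{if } r\mid j,\end{cases}$$ where $\{y_1,\dots,y_m\}\subseteq\{1,\dots,s\}$ is the set of all indices $k$ with $(\mathcal{C}_k)^r=\mathcal{C}_i$, and by convention $T(g)_{i,rj}=0$ when $rj>n$.
   Context: $G\wr S_n$ is the set of pairs $(f,\pi)$ with $f:\{1,\dots,n\}\to G$ and $\pi\in S_n$, with product $(f,\pi)(f',\pi')=(ff'_\pi,\pi\pi')$, $f'_\pi(i)=f'(\pi^{-1}(i))$, pointwise product of functions. For $(f,\pi)$ and a cycle $(j,\pi(j),\dots,\pi^t(j))$ of $\pi$, its cycle product is $f(j)f(\pi^{-1}(j))\cdots f(\pi^{-t}(j))$; its conjugacy class is independent of the starting point. The type $T(g)$ of $g=(f,\pi)$ is the $s\times n$ matrix whose $(i,k)$ entry is the number of $k$-cycles of $\pi$ whose cycle product lies in $\mathcal{C}_i$. For a conjugacy class $\mathcal{C}$ of $G$, $(\mathcal{C})^r=\{x^r: x\in\mathcal{C}\}$, which is again a conjugacy class of $G$. *)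

theory Defs
  imports "HOL-Algebra.Group" "HOL-Combinatorics.Permutations" "HOL-Computational_Algebra.Primes"
begin

definition wreath_elem :: "('a, 'b) monoid_scheme \<Rightarrow> nat \<Rightarrow> (nat \<Rightarrow> 'a) \<times> (nat \<Rightarrow> nat) \<Rightarrow> bool" where
  "wreath_elem G n g \<longleftrightarrow> (\<forall>i\<in>{1..n}. fst g i \<in> carrier G) \<and> snd g permutes {1..n}"

definition wreath_mult :: "('a, 'b) monoid_scheme \<Rightarrow> (nat \<Rightarrow> 'a) \<times> (nat \<Rightarrow> nat) \<Rightarrow> (nat \<Rightarrow> 'a) \<times> (nat \<Rightarrow> nat) \<Rightarrow> (nat \<Rightarrow> 'a) \<times> (nat \<Rightarrow> nat)" where
  "wreath_mult G g h = ((\<lambda>i. fst g i \<otimes>\<^bsub>G\<^esub> fst h (Hilbert_Choice.inv (snd g) i)), snd g \<circ> snd h)"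

fun wreath_pow :: "('a, 'b) monoid_scheme \<Rightarrow> (nat \<Rightarrow> 'a) \<times> (nat \<Rightarrow> nat) \<Rightarrow> nat \<Rightarrow> (nat \<Rightarrow> 'a) \<times> (nat \<Rightarrow> nat)" where
  "wreath_pow G g 0 = ((\<lambda>i. \<one>\<^bsub>G\<^esub>), id)"
| "wreath_pow G g (Suc m) = wreath_mult G (wreath_pow G g m) g"

definition perm_cycle :: "(nat \<Rightarrow> nat) \<Rightarrow> nat \<Rightarrow> nat set" where
  "perm_cycle p j = {(p ^^ m) j | m. True}"

fun cycle_prod_aux :: "('a, 'b) monoid_scheme \<Rightarrow> (nat \<Rightarrow> 'a) \<Rightarrow> (nat \<Rightarrow> nat) \<Rightarrow> nat \<Rightarrow> nat \<Rightarrow> 'a" where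
  "cycle_prod_aux G f p j 0 = \<one>\<^bsub>G\<^esub>"
| "cycle_prod_aux G f p j (Suc m) = f j \<otimes>\<^bsub>G\<^esub> cycle_prod_aux G f p (Hilbert_Choice.inv p j) m"

definition cycle_prod :: "('a, 'b) monoid_scheme \<Rightarrow> (nat \<Rightarrow> 'a) \<times> (nat \<Rightarrow> nat) \<Rightarrow> nat \<Rightarrow> 'a" where
  "cycle_prod G g j = cycle_prod_aux G (fst g) (snd g) j (card (perm_cycle (snd g) j))"

definition conj_class :: "('a, 'b) monoid_scheme \<Rightarrow> 'a \<Rightarrow> 'a set" where
  "conj_class G x = {inv\<^bsub>G\<^esub> h \<otimes>\<^bsub>G\<^esub> x \<otimes>\<^bsub>G\<^esub> h | h. h \<in> carrier G}"

definition conj_classes :: "('a, 'b) monoid_scheme \<Rightarrow> 'a set set" where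
  "conj_classes G = conj_class G ` carrier G"

definition class_pow :: "('a, 'b) monoid_scheme \<Rightarrow> 'a set \<Rightarrow> nat \<Rightarrow> 'a set" where
  "class_pow G C r = (\<lambda>x. x [^]\<^bsub>G\<^esub> r) ` C"

text \<open>Type entry T(g)_{C,k}: number of k-cycles of pi whose cycle product lies in C
  (the cycle product's conjugacy class is independent of the starting point).
  Automatically 0 when k > n.\<close>
definition wreath_type :: "('a, 'b) monoid_scheme \<Rightarrow> nat \<Rightarrow> (nat \<Rightarrow> 'a) \<times> (nat \<Rightarrow> nat) \<Rightarrow> 'a set \<Rightarrow> nat \<Rightarrow> nat" where
  "wreath_type G n g C k = card {Z. \<exists>j\<in>{1..n}. Z = perm_cycle (snd g) j \<and> card Z = k \<and>
       (\<exists>i\<in>Z. cycle_prod G g i \<in> C)}"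

end

theory Submission
  imports Defs "HOL-Combinatorics.Cycles" "HOL-Combinatorics.Orbits"
begin

(* Write g = (f, pi). The permutation of g^r is pi^r, and the i-th coordinate of g^r is the
  product of r consecutive values of f going backwards along the pi-cycle through i. If that
  cycle has length L, then pi^r splits it into gcd L r cycles of length L / gcd L r, and on each
  of them the cycle product of g^r is the cycle product of g raised to r / gcd L r. For a prime r,
  a j-cycle with r not dividing j therefore stays a j-cycle whose cycle product is raised to the
  r-th power, while an rj-cycle splits into r cycles of length j with unchanged cycle product.
  The identity follows by counting points on cycles (j per j-cycle) instead of cycles. *)

section \<open>Cycles of a permutation\<close>

lemma perm_cycle_eq_orbit:
  assumes "permutation p"
  shows "perm_cycle p x = orbit p x"
  unfolding perm_cycle_def orbit_altdef_permutation[OF assms] ..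

lemma card_perm_cycle:
  assumes "permutation p"
  shows "card (perm_cycle p x) = funpow_dist1 p x x"
proof -
  have "x \<in> orbit p x" using assms by (rule permutation_self_in_orbit)
  then show ?thesis
    unfolding perm_cycle_eq_orbit[OF assms] orbit_conv_funpow_dist1[OF \<open>x \<in> orbit p x\<close>]
    using card_image[OF inj_on_funpow_dist1[OF \<open>x \<in> orbit p x\<close>]] by simp
qed

lemma card_perm_cycle_pos:
  assumes "permutation p"
  shows "0 < card (perm_cycle p x)"
  using card_perm_cycle[OF assms] by simp

lemma funpow_eq_self_iff_card_perm_cycle_dvd:
  assumes "permutation p"
  shows "(p ^^ m) x = x \<longleftrightarrow> card (perm_cycle p x) dvd m"
proof -
  define d where "d = funpow_dist1 p x x"
  have "x \<in> orbit p x" using assms by (rule permutation_self_in_orbit)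
  then have "(p ^^ d) x = x" unfolding d_def by (rule funpow_dist1_prop)
  then have "(p ^^ m) x = x \<longleftrightarrow> (p ^^ (m mod d)) x = x" by (simp add: funpow_mod_eq)
  also have "\<dots> \<longleftrightarrow> m mod d = 0"
    using funpow_dist1_least[of "m mod d" p x x] unfolding d_def by (cases "m mod d = 0") auto
  finally show ?thesis by (simp add: card_perm_cycle[OF assms] d_def dvd_eq_mod_eq_0)
qed

lemma inv_funpow_card_perm_cycle:
  assumes "permutation p"
  shows "(Hilbert_Choice.inv p ^^ card (perm_cycle p x)) x = x"
proof -
  have bij: "bij p" using assms by (rule permutation_bijective)
  have "(p ^^ card (perm_cycle p x)) x = x"
    by (simp add: funpow_eq_self_iff_card_perm_cycle_dvd[OF assms])
  then have "Hilbert_Choice.inv (p ^^ card (perm_cycle p x)) x = x"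
    using inv_f_eq[OF bij_is_inj[OF bij_fn[OF bij]]] by metis
  then show ?thesis by (simp add: inv_fn[OF bij])
qed

lemma perm_cycle_eq:
  assumes "permutation p" "y \<in> perm_cycle p x"
  shows "perm_cycle p y = perm_cycle p x"
  using assms unfolding perm_cycle_eq_orbit[OF assms(1)]
  by (metis cyclic_on_orbit' orbit_cyclic_eq3)

lemma perm_cycle_subset:
  assumes "p permutes S" "x \<in> S"
  shows "perm_cycle p x \<subseteq> S"
  unfolding perm_cycle_def using permutes_in_image[OF permutes_funpow[OF assms(1)]] assms(2) by auto

lemma self_in_perm_cycle: "x \<in> perm_cycle p x"
  unfolding perm_cycle_def by (auto intro: exI[of _ 0])

lemma invariant_on_perm_cycle:
  assumes "\<And>z. Q (p z) = Q z" "y \<in> perm_cycle p x"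
  shows "Q y = Q x"
proof -
  have "Q ((p ^^ m) x) = Q x" for m by (induction m) (simp_all add: assms(1))
  then show ?thesis using assms(2) unfolding perm_cycle_def by auto
qed

lemma div_gcd_dvd_if_dvd_mult:
  fixes L r m :: nat
  assumes "0 < L" "L dvd r * m"
  shows "L div gcd L r dvd m"
proof -
  define d where "d = gcd L r"
  have "0 < d" using assms(1) unfolding d_def by simp
  have "L div d * d dvd r div d * m * d"
    using assms(2) by (simp add: d_def mult.commute mult.left_commute)
  then have "L div d dvd r div d * m" using \<open>0 < d\<close> by simp
  moreover have "coprime (L div d) (r div d)"
    unfolding d_def using assms(1) by (intro div_gcd_coprime) simp
  ultimately show ?thesis unfolding d_def by (simp add: coprime_dvd_mult_right_iff)
qed

lemma card_perm_cycle_funpow: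
  fixes x :: nat
  assumes "permutation p"
  defines "L \<equiv> card (perm_cycle p x)"
  shows "card (perm_cycle (p ^^ r) x) = L div gcd L r"
proof (rule dvd_antisym)
  have dvd_iff: "card (perm_cycle (p ^^ r) x) dvd m \<longleftrightarrow> L dvd r * m" for m
  proof -
    have "card (perm_cycle (p ^^ r) x) dvd m \<longleftrightarrow> ((p ^^ r) ^^ m) x = x"
      by (rule funpow_eq_self_iff_card_perm_cycle_dvd[OF permutation_funpow[OF assms(1)], symmetric])
    also have "\<dots> \<longleftrightarrow> L dvd r * m"
      unfolding funpow_mult L_def by (rule funpow_eq_self_iff_card_perm_cycle_dvd[OF assms(1)])
    finally show ?thesis .
  qed
  have "r * (L div gcd L r) = L * (r div gcd L r)"
    by (simp add: div_mult_swap mult.commute)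
  then have "L dvd r * (L div gcd L r)" by simp
  then show "card (perm_cycle (p ^^ r) x) dvd L div gcd L r" by (simp only: dvd_iff)
  from dvd_iff[THEN iffD1, OF dvd_refl]
  show "L div gcd L r dvd card (perm_cycle (p ^^ r) x)"
    using card_perm_cycle_pos[OF assms(1)] unfolding L_def by (rule div_gcd_dvd_if_dvd_mult[rotated])
qed

lemma card_perm_cycles_mult:
  assumes "p permutes S" "finite S" "\<And>z. Q (p z) = Q z"
  shows "card {Z. \<exists>x\<in>S. Z = perm_cycle p x \<and> card Z = k \<and> (\<exists>i\<in>Z. Q i)} * k
       = card {x\<in>S. card (perm_cycle p x) = k \<and> Q x}"
proof -
  let ?U = "{Z. \<exists>x\<in>S. Z = perm_cycle p x \<and> card Z = k \<and> (\<exists>i\<in>Z. Q i)}"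
  have perm: "permutation p" using assms(1,2) permutation_permutes by blast
  have union: "\<Union>?U = {x\<in>S. card (perm_cycle p x) = k \<and> Q x}"
  proof (intro equalityI subsetI)
    fix y assume "y \<in> \<Union>?U"
    then obtain x i where x: "x \<in> S" "y \<in> perm_cycle p x" "card (perm_cycle p x) = k"
      "i \<in> perm_cycle p x" "Q i" by auto
    have "Q y = Q i" using invariant_on_perm_cycle[of Q p, OF assms(3)] x(2,4) by metis
    then show "y \<in> {x\<in>S. card (perm_cycle p x) = k \<and> Q x}"
      using perm_cycle_subset[OF assms(1) x(1)] perm_cycle_eq[OF perm x(2)] x by auto
  qed (use self_in_perm_cycle in fastforce)
  have "finite ?U"
    by (rule finite_subset[of _ "Pow S"]) (use perm_cycle_subset[OF assms(1)] assms(2) in auto)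
  moreover have "finite (\<Union>?U)" unfolding union using assms(2) by simp
  moreover have "Z1 \<inter> Z2 = {}" if "Z1 \<in> ?U" "Z2 \<in> ?U" "Z1 \<noteq> Z2" for Z1 Z2
    using that perm_cycle_eq[OF perm] by blast
  ultimately have "k * card ?U = card (\<Union>?U)"
    by (intro card_partition) auto
  then show ?thesis unfolding union by (simp add: mult.commute)
qed


section \<open>Conjugacy classes\<close>

context group
begin

lemma inv_mult_cancel_left [simp]:
  "x \<in> carrier G \<Longrightarrow> y \<in> carrier G \<Longrightarrow> inv x \<otimes> (x \<otimes> y) = y"
  by (simp add: m_assoc[symmetric])

lemma mult_inv_cancel_left [simp]:
  "x \<in> carrier G \<Longrightarrow> y \<in> carrier G \<Longrightarrow> x \<otimes> (inv x \<otimes> y) = y"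
  by (simp add: m_assoc[symmetric])

lemma conj_class_conj:
  assumes "h \<in> carrier G" "c \<in> carrier G"
  shows "conj_class G (inv h \<otimes> c \<otimes> h) = conj_class G c"
proof (intro equalityI subsetI)
  fix y assume "y \<in> conj_class G (inv h \<otimes> c \<otimes> h)"
  then obtain k where k: "k \<in> carrier G" "y = inv k \<otimes> (inv h \<otimes> c \<otimes> h) \<otimes> k"
    unfolding conj_class_def by auto
  then have "y = inv (h \<otimes> k) \<otimes> c \<otimes> (h \<otimes> k)"
    using assms by (simp add: inv_mult_group m_assoc)
  then show "y \<in> conj_class G c" unfolding conj_class_def using assms k by blast
next
  fix y assume "y \<in> conj_class G c"
  then obtain k where k: "k \<in> carrier G" "y = inv k \<otimes> c \<otimes> k"
    unfolding conj_class_def by auto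
  then have "y = inv (inv h \<otimes> k) \<otimes> (inv h \<otimes> c \<otimes> h) \<otimes> (inv h \<otimes> k)"
    using assms by (simp add: inv_mult_group m_assoc)
  then show "y \<in> conj_class G (inv h \<otimes> c \<otimes> h)" unfolding conj_class_def using assms k by blast
qed

lemma self_in_conj_class: "c \<in> carrier G \<Longrightarrow> c \<in> conj_class G c"
  unfolding conj_class_def by (auto intro!: exI[of _ \<one>])

lemma conj_class_eq_if_mem:
  assumes "C \<in> conj_classes G" "z \<in> C"
  shows "conj_class G z = C"
proof -
  obtain c where c: "c \<in> carrier G" "C = conj_class G c"
    using assms(1) unfolding conj_classes_def by auto
  then obtain h where "h \<in> carrier G" "z = inv h \<otimes> c \<otimes> h"
    using assms(2) unfolding conj_class_def by auto
  then show ?thesis using conj_class_conj c by simp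
qed

lemma conj_class_mult_commute:
  assumes "a \<in> carrier G" "b \<in> carrier G"
  shows "conj_class G (a \<otimes> b) = conj_class G (b \<otimes> a)"
proof -
  have "a \<otimes> b = inv b \<otimes> (b \<otimes> a) \<otimes> b" using assms by (simp add: m_assoc)
  then show ?thesis using conj_class_conj assms by (metis m_closed)
qed

lemma mult_in_conj_class_commute:
  assumes "C \<in> conj_classes G" "a \<in> carrier G" "b \<in> carrier G"
  shows "a \<otimes> b \<in> C \<longleftrightarrow> b \<otimes> a \<in> C"
  using conj_class_eq_if_mem[OF assms(1)] conj_class_mult_commute[OF assms(2,3)]
    self_in_conj_class assms(2,3) by (metis m_closed)

lemma conj_pow:
  assumes "h \<in> carrier G" "y \<in> carrier G"
  shows "(inv h \<otimes> y \<otimes> h) [^] (m::nat) = inv h \<otimes> y [^] m \<otimes> h"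
proof (induction m)
  case (Suc m)
  then show ?case using assms by (simp add: m_assoc)
qed (use assms in simp)

lemma class_pow_conj_class:
  assumes "y \<in> carrier G"
  shows "class_pow G (conj_class G y) r = conj_class G (y [^] r)"
proof -
  have "conj_class G (y [^] r) = (\<lambda>h. inv h \<otimes> y [^] r \<otimes> h) ` carrier G"
    unfolding conj_class_def by auto
  also have "\<dots> = (\<lambda>h. (inv h \<otimes> y \<otimes> h) [^] r) ` carrier G"
    using conj_pow[OF _ assms] by simp
  also have "\<dots> = class_pow G (conj_class G y) r"
    unfolding class_pow_def conj_class_def by auto
  finally show ?thesis ..
qed

lemma pow_in_conj_class_iff:
  assumes "C \<in> conj_classes G" "y \<in> carrier G"
  shows "y [^] r \<in> C \<longleftrightarrow> (\<exists>D\<in>conj_classes G. class_pow G D r = C \<and> y \<in> D)"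
proof
  assume "y [^] r \<in> C"
  then have "class_pow G (conj_class G y) r = C"
    using class_pow_conj_class[OF assms(2)] conj_class_eq_if_mem[OF assms(1)] by simp
  then show "\<exists>D\<in>conj_classes G. class_pow G D r = C \<and> y \<in> D"
    using assms(2) self_in_conj_class unfolding conj_classes_def by blast
qed (auto simp: class_pow_def)

end


section \<open>Cycle products in the wreath product\<close>

lemma snd_wreath_pow: "snd (wreath_pow G g m) = snd g ^^ m"
  by (induction m) (simp_all add: wreath_mult_def funpow_Suc_right del: funpow.simps)

lemma wreath_elem_permutation: "wreath_elem G n g \<Longrightarrow> permutation (snd g)"
  unfolding wreath_elem_def using permutation_permutes by blast

context monoid
begin

lemma cycle_prod_aux_closed:
  assumes "p permutes S" "\<forall>i\<in>S. f i \<in> carrier G" "j \<in> S"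
  shows "cycle_prod_aux G f p j m \<in> carrier G"
  using assms(3)
proof (induction m arbitrary: j)
  case (Suc m)
  then show ?case
    using assms(2) permutes_in_image[OF permutes_inv[OF assms(1)]] by simp
qed simp

lemma cycle_prod_aux_add:
  assumes "p permutes S" "\<forall>i\<in>S. f i \<in> carrier G" "j \<in> S"
  shows "cycle_prod_aux G f p j (a + b) =
    cycle_prod_aux G f p j a \<otimes> cycle_prod_aux G f p ((Hilbert_Choice.inv p ^^ a) j) b"
  using assms(3)
proof (induction a arbitrary: j)
  case 0
  then show ?case using cycle_prod_aux_closed[OF assms(1,2)] by simp
next
  case (Suc a)
  have "Hilbert_Choice.inv p j \<in> S"
    using permutes_in_image[OF permutes_inv[OF assms(1)]] Suc.prems by simp
  moreover have "(Hilbert_Choice.inv p ^^ Suc a) j \<in> S"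
    using permutes_in_image[OF permutes_funpow[OF permutes_inv[OF assms(1)]]] Suc.prems by blast
  ultimately show ?case
    using Suc assms(2) cycle_prod_aux_closed[OF assms(1,2)]
    by (simp add: m_assoc funpow_swap1)
qed

lemma cycle_prod_aux_mult_period:
  assumes "p permutes S" "\<forall>i\<in>S. f i \<in> carrier G" "j \<in> S"
    and "(Hilbert_Choice.inv p ^^ L) j = j"
  shows "cycle_prod_aux G f p j (c * L) = cycle_prod_aux G f p j L [^] c"
proof (induction c)
  case (Suc c)
  have "(Hilbert_Choice.inv p ^^ (c * L)) j = j"
    using funpow_mod_eq[OF assms(4), of "c * L"] by simp
  then show ?case
    using Suc cycle_prod_aux_add[OF assms(1-3), of "c * L" L] by (simp add: add.commute)
qed simp

lemma cycle_prod_aux_funpow: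
  assumes "p permutes S" "\<forall>i\<in>S. f i \<in> carrier G" "j \<in> S"
    and "\<forall>i\<in>S. F i = cycle_prod_aux G f p i r"
  shows "cycle_prod_aux G F (p ^^ r) j m = cycle_prod_aux G f p j (r * m)"
  using assms(3)
proof (induction m arbitrary: j)
  case (Suc m)
  have "Hilbert_Choice.inv (p ^^ r) = Hilbert_Choice.inv p ^^ r"
    using inv_fn[OF permutes_bij[OF assms(1)]] .
  moreover have "(Hilbert_Choice.inv p ^^ r) j \<in> S"
    using permutes_in_image[OF permutes_funpow[OF permutes_inv[OF assms(1)]]] Suc.prems by blast
  ultimately show ?case
    using Suc cycle_prod_aux_add[OF assms(1,2) Suc.prems, of r "r * m"] assms(4) by simp
qed simp

lemma fst_wreath_pow:
  assumes "wreath_elem G n g" "i \<in> {1..n}"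
  shows "fst (wreath_pow G g m) i = cycle_prod_aux G (fst g) (snd g) i m"
proof (induction m)
  case (Suc m)
  have p: "snd g permutes {1..n}" and f: "\<forall>i\<in>{1..n}. fst g i \<in> carrier G"
    using assms(1) unfolding wreath_elem_def by auto
  have "(Hilbert_Choice.inv (snd g) ^^ m) i \<in> {1..n}"
    using permutes_in_image[OF permutes_funpow[OF permutes_inv[OF p]]] assms(2) by blast
  then show ?case
    using Suc cycle_prod_aux_add[OF p f assms(2), of m 1] f
    by (simp add: wreath_mult_def snd_wreath_pow inv_fn[OF permutes_bij[OF p]])
qed simp

lemma wreath_elem_wreath_pow:
  assumes "wreath_elem G n g"
  shows "wreath_elem G n (wreath_pow G g m)"
proof -
  have p: "snd g permutes {1..n}" and f: "\<forall>i\<in>{1..n}. fst g i \<in> carrier G"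
    using assms unfolding wreath_elem_def by auto
  show ?thesis unfolding wreath_elem_def snd_wreath_pow
    using fst_wreath_pow[OF assms] cycle_prod_aux_closed[OF p f] permutes_funpow[OF p] by simp
qed

lemma cycle_prod_closed:
  assumes "wreath_elem G n g" "x \<in> {1..n}"
  shows "cycle_prod G g x \<in> carrier G"
  using assms cycle_prod_aux_closed unfolding wreath_elem_def cycle_prod_def by blast

lemma cycle_prod_wreath_pow:
  assumes "wreath_elem G n g" "x \<in> {1..n}"
  defines "L \<equiv> card (perm_cycle (snd g) x)"
  shows "cycle_prod G (wreath_pow G g r) x = cycle_prod G g x [^] (r div gcd L r)"
proof -
  let ?p = "snd g"
  have p: "?p permutes {1..n}" and f: "\<forall>i\<in>{1..n}. fst g i \<in> carrier G"
    using assms(1) unfolding wreath_elem_def by auto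
  have perm: "permutation ?p" using wreath_elem_permutation[OF assms(1)] .
  have period: "(Hilbert_Choice.inv ?p ^^ L) x = x"
    unfolding L_def by (rule inv_funpow_card_perm_cycle[OF perm])
  have "r * (L div gcd L r) = r div gcd L r * L"
    by (simp add: div_mult_swap mult.commute)
  then have "cycle_prod G (wreath_pow G g r) x = cycle_prod_aux G (fst g) ?p x (r div gcd L r * L)"
    unfolding cycle_prod_def snd_wreath_pow card_perm_cycle_funpow[OF perm] L_def[symmetric]
    using cycle_prod_aux_funpow[OF p f assms(2)] fst_wreath_pow[OF assms(1)] by simp
  also have "\<dots> = cycle_prod G g x [^] (r div gcd L r)"
    unfolding cycle_prod_def L_def[symmetric] by (rule cycle_prod_aux_mult_period[OF p f assms(2) period])
  finally show ?thesis .
qed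

end

context group
begin

lemma cycle_prod_step_in_conj_class_iff:
  assumes "wreath_elem G n g" "C \<in> conj_classes G"
  shows "cycle_prod G g (snd g x) \<in> C \<longleftrightarrow> cycle_prod G g x \<in> C"
proof -
  let ?p = "snd g" and ?f = "fst g"
  have p: "?p permutes {1..n}" and f: "\<forall>i\<in>{1..n}. ?f i \<in> carrier G"
    using assms(1) unfolding wreath_elem_def by auto
  show ?thesis
  proof (cases "x \<in> {1..n}")
    case False
    then show ?thesis by (simp add: permutes_not_in[OF p])
  next
    case x: True
    have perm: "permutation ?p" using wreath_elem_permutation[OF assms(1)] .
    obtain M where M: "card (perm_cycle ?p x) = Suc M"
      using card_perm_cycle_pos[OF perm] gr0_implies_Suc by blast
    have "?p x \<in> perm_cycle ?p x" unfolding perm_cycle_def by (auto intro: exI[of _ 1])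
    then have M': "card (perm_cycle ?p (?p x)) = Suc M"
      using perm_cycle_eq[OF perm] M by simp
    have "Hilbert_Choice.inv ?p ((Hilbert_Choice.inv ?p ^^ M) x) = x"
      using inv_funpow_card_perm_cycle[OF perm, of x] M by simp
    then have M_steps_back: "(Hilbert_Choice.inv ?p ^^ M) x = ?p x"
      by (metis permutes_inverses(1)[OF p])
    have px: "?p x \<in> {1..n}" using permutes_in_image[OF p] x by simp
    have "cycle_prod G g x = cycle_prod_aux G ?f ?p x (M + 1)"
      unfolding cycle_prod_def M by simp
    also have "\<dots> = cycle_prod_aux G ?f ?p x M \<otimes> ?f (?p x)"
      using cycle_prod_aux_add[OF p f x, of M 1] M_steps_back f px by simp
    finally have at_x: "cycle_prod G g x = cycle_prod_aux G ?f ?p x M \<otimes> ?f (?p x)" .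
    have at_px: "cycle_prod G g (?p x) = ?f (?p x) \<otimes> cycle_prod_aux G ?f ?p x M"
      unfolding cycle_prod_def M' using permutes_inverses(2)[OF p] by simp
    show ?thesis
      unfolding at_x at_px
      using mult_in_conj_class_commute[OF assms(2) f[rule_format, OF px] cycle_prod_aux_closed[OF p f x]] .
  qed
qed

end


section \<open>Counting points on cycles\<close>

lemma gcd_prime_right:
  fixes L r :: nat
  assumes "prime r"
  shows "gcd L r = (if r dvd L then r else 1)"
proof (cases "r dvd L")
  case False
  then have "coprime r L" using assms by (rule prime_imp_coprime[rotated])
  then show ?thesis using False by (simp add: coprime_commute)
qed (simp add: gcd_nat.absorb2)

definition cycle_points ::
    "('a, 'b) monoid_scheme \<Rightarrow> nat \<Rightarrow> (nat \<Rightarrow> 'a) \<times> (nat \<Rightarrow> nat) \<Rightarrow> 'a set \<Rightarrow> nat \<Rightarrow> nat set"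
  where
  "cycle_points G n g C k = {x \<in> {1..n}. card (perm_cycle (snd g) x) = k \<and> cycle_prod G g x \<in> C}"

context group
begin

lemma card_cycle_points:
  assumes "wreath_elem G n g" "C \<in> conj_classes G"
  shows "card (cycle_points G n g C k) = wreath_type G n g C k * k"
  unfolding wreath_type_def cycle_points_def
proof (rule card_perm_cycles_mult[symmetric])
  show "snd g permutes {1..n}" using assms(1) unfolding wreath_elem_def by simp
  show "cycle_prod G g (snd g z) \<in> C \<longleftrightarrow> cycle_prod G g z \<in> C" for z
    using cycle_prod_step_in_conj_class_iff[OF assms] .
qed simp

lemma cycle_points_wreath_pow:
  assumes "wreath_elem G n g" "C \<in> conj_classes G" "prime r"
  shows "cycle_points G n (wreath_pow G g r) C j =
    (if r dvd j then {} else \<Union>D\<in>{D \<in> conj_classes G. class_pow G D r = C}. cycle_points G n g D j)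
    \<union> cycle_points G n g C (r * j)" (is "?lhs = ?rhs")
proof (rule Set.set_eqI)
  fix x
  show "x \<in> ?lhs \<longleftrightarrow> x \<in> ?rhs"
  proof (cases "x \<in> {1..n}")
    case x: True
    define L where "L = card (perm_cycle (snd g) x)"
    have len: "card (perm_cycle (snd (wreath_pow G g r)) x) = L div gcd L r"
      unfolding L_def snd_wreath_pow by (rule card_perm_cycle_funpow[OF wreath_elem_permutation[OF assms(1)]])
    have prod: "cycle_prod G (wreath_pow G g r) x = cycle_prod G g x [^] (r div gcd L r)"
      unfolding L_def by (rule cycle_prod_wreath_pow[OF assms(1) x])
    have y: "cycle_prod G g x \<in> carrier G" by (rule cycle_prod_closed[OF assms(1) x])
    have "0 < r" using assms(3) prime_gt_0_nat by blast
    show ?thesis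
    proof (cases "r dvd L")
      case True
      then show ?thesis
        using x len prod y \<open>0 < r\<close> gcd_prime_right[OF assms(3), of L]
        by (auto simp: cycle_points_def L_def[symmetric])
    next
      case False
      then show ?thesis
        using x len prod y gcd_prime_right[OF assms(3), of L]
          pow_in_conj_class_iff[OF assms(2) y, of r]
        by (auto simp: cycle_points_def L_def[symmetric])
    qed
  qed (auto simp: cycle_points_def)
qed

lemma card_cycle_points_wreath_pow:
  assumes "wreath_elem G n g" "C \<in> conj_classes G" "prime r" "finite (carrier G)"
  defines "Ds \<equiv> {D \<in> conj_classes G. class_pow G D r = C}"
  shows "card (cycle_points G n (wreath_pow G g r) C j) =
    (if r dvd j then 0 else \<Sum>D\<in>Ds. card (cycle_points G n g D j))
      + card (cycle_points G n g C (r * j))"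
proof -
  have fin: "finite (cycle_points G n g D k)" for D k unfolding cycle_points_def by simp
  have "finite Ds" using assms(4) unfolding Ds_def conj_classes_def by simp
  moreover have "cycle_points G n g D1 j \<inter> cycle_points G n g D2 j = {}"
    if "D1 \<in> Ds" "D2 \<in> Ds" "D1 \<noteq> D2" for D1 D2
    using that conj_class_eq_if_mem unfolding Ds_def cycle_points_def by blast
  ultimately have card_UN:
    "card (\<Union>D\<in>Ds. cycle_points G n g D j) = (\<Sum>D\<in>Ds. card (cycle_points G n g D j))"
    using fin by (intro card_UN_disjoint) auto
  have "j \<noteq> r * j" if "x \<in> cycle_points G n g D j" for x D
    using that card_perm_cycle_pos[OF wreath_elem_permutation[OF assms(1)], of x]
      prime_gt_1_nat[OF assms(3)] unfolding cycle_points_def by auto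
  then have "(\<Union>D\<in>Ds. cycle_points G n g D j) \<inter> cycle_points G n g C (r * j) = {}"
    unfolding cycle_points_def by blast
  moreover have "finite (\<Union>D\<in>Ds. cycle_points G n g D j)" using \<open>finite Ds\<close> fin by blast
  ultimately show ?thesis
    unfolding cycle_points_wreath_pow[OF assms(1-3)] Ds_def[symmetric]
    using card_UN fin by (simp add: card_Un_disjoint)
qed

end

theorem lemma4p2:
  fixes G :: "('a, 'b) monoid_scheme" and n r :: nat
    and g :: "(nat \<Rightarrow> 'a) \<times> (nat \<Rightarrow> nat)"
  assumes "group G" and "finite (carrier G)"
    and "prime r"
    and "wreath_elem G n g"
    and "C \<in> conj_classes G" and "j \<in> {1..n}"
  shows "wreath_type G n (wreath_pow G g r) C j =
    (if \<not> r dvd j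
     then (\<Sum>D\<in>{D \<in> conj_classes G. class_pow G D r = C}. wreath_type G n g D j)
          + r * wreath_type G n g C (r * j)
     else r * wreath_type G n g C (r * j))"
proof -
  interpret group G by fact
  define Ds where "Ds = {D \<in> conj_classes G. class_pow G D r = C}"
  have "wreath_type G n (wreath_pow G g r) C j * j
      = card (cycle_points G n (wreath_pow G g r) C j)"
    using card_cycle_points[OF wreath_elem_wreath_pow[OF assms(4)] assms(5)] by simp
  also have "\<dots> = (if r dvd j then 0 else \<Sum>D\<in>Ds. card (cycle_points G n g D j))
      + card (cycle_points G n g C (r * j))"
    unfolding Ds_def by (rule card_cycle_points_wreath_pow[OF assms(4,5,3,2)])
  also have "\<dots> = ((if r dvd j then 0 else \<Sum>D\<in>Ds. wreath_type G n g D j)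
      + r * wreath_type G n g C (r * j)) * j"
    using card_cycle_points[OF assms(4)] assms(5)
    by (simp add: Ds_def sum_distrib_left algebra_simps)
  finally show ?thesis
    using assms(6) by (auto simp: Ds_def)
qed

end
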